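(* Let $P$ be a Poisson prime ideal of $A$. (1) If $P$ is proper then $\gamma(P)$ is dense. (2) If $t_i=1$ for some $i$, then in $\gamma(P)$ one has $\delta_i=1$ and, in $V_{\gamma(P)}$, $v_i=s_i$.
   Context: Let $n\ge 3$, $A=\mathbb{C}[x_1,\dots,x_n]$. Fix $s_1,t_1,\dots,s_{n-2},t_{n-2}\in A$ with each $t_i\ne 0$ and $s_i,t_i$ coprime, such that $s_1/t_1,\dots,s_{n-2}/t_{n-2}$ are algebraically independent over $\mathbb{C}$. $A$ carries the Poisson bracket $\{f,g\}=(t_1\cdots t_{n-2})^2\,\mathrm{Jac}(f,g,s_1/t_1,\dots,s_{n-2}/t_{n-2})$ ($\mathrm{Jac}$ = Jacobian determinant with respect to $x_1,\dots,x_n$). A Poisson prime ideal is a prime ideal $P$ with $\{P,A\}\subseteq P$; it is proper if not all $\{a,b\}$ ($a,b\in A$) lie in $P$. For $P$ a Poisson prime ideal, $\gamma(P)=((\gamma_1,\delta_1),\dots,(\gamma_{n-2},\delta_{n-2}))\in(\{0,1\}\times\{0,1\})^{n-2}$ is defined by $\gamma_i=0\iff s_i\in P$ and $\delta_i=0\iff t_i\in P$. A sequence $\gamma=((\gamma_1,\delta_1),\dots,(\gamma_{n-2},\delta_{n-2}))$ is dense if $(\gamma_i,\delta_i)\ne(0,0)$ for every $i$. For such $\gamma$, $V_\gamma=\{v_1,\dots,v_{n-2}\}$ where $v_i=s_i/t_i$ if $\delta_i=1$ and $v_i=t_i/s_i$ otherwise. *)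

theory Defs
  imports Complex_Main "HOL-Library.Poly_Mapping" "HOL-Computational_Algebra.Fraction_Field"
          "HOL-Combinatorics.Permutations"
begin

text \<open>Multivariate polynomials over the complex numbers: monomials are finitely
supported exponent vectors (variable index \<Rightarrow> exponent); a polynomial is a finitely
supported map from monomials to coefficients.  Variable x_(j+1) of the paper is index j.\<close>

type_synonym monom = "nat \<Rightarrow>\<^sub>0 nat"
type_synonym mpoly = "monom \<Rightarrow>\<^sub>0 complex"

definition polyA :: "nat \<Rightarrow> mpoly set" where
  "polyA n = {p. \<forall>m\<in>Poly_Mapping.keys p. Poly_Mapping.keys m \<subseteq> {..<n}}"

definition coprime_poly :: "mpoly \<Rightarrow> mpoly \<Rightarrow> bool" where
  "coprime_poly a b \<longleftrightarrow> (\<forall>c. c dvd a \<longrightarrow> c dvd b \<longrightarrow> c dvd 1)"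

definition pder :: "nat \<Rightarrow> mpoly \<Rightarrow> mpoly" where
  "pder j p = (\<Sum>m\<in>Poly_Mapping.keys p. Poly_Mapping.single (m - Poly_Mapping.single j 1)
                  (Poly_Mapping.lookup p m * of_nat (Poly_Mapping.lookup m j)))"

abbreviation frac :: "mpoly \<Rightarrow> mpoly fract" where
  "frac p \<equiv> Fract p 1"

definition pder_quot :: "nat \<Rightarrow> mpoly \<Rightarrow> mpoly \<Rightarrow> mpoly fract" where
  "pder_quot j s t = Fract (t * pder j s - s * pder j t) (t ^ 2)"

definition detn :: "nat \<Rightarrow> (nat \<Rightarrow> nat \<Rightarrow> 'a::comm_ring_1) \<Rightarrow> 'a" where
  "detn n M = (\<Sum>p | p permutes {..<n}. of_int (sign p) * (\<Prod>i<n. M i (p i)))"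

text \<open>Jacobian matrix of (f, g, s_1/t_1, ..., s_(n-2)/t_(n-2)) w.r.t. x_1..x_n
(rows: functions, columns: variables); s, t are indexed 0..n-3.\<close>
definition jac_matrix :: "(nat \<Rightarrow> mpoly) \<Rightarrow> (nat \<Rightarrow> mpoly) \<Rightarrow> mpoly \<Rightarrow> mpoly
    \<Rightarrow> nat \<Rightarrow> nat \<Rightarrow> mpoly fract" where
  "jac_matrix s t f g k j =
     (if k = 0 then frac (pder j f)
      else if k = 1 then frac (pder j g)
      else pder_quot j (s (k - 2)) (t (k - 2)))"

definition pbracket :: "nat \<Rightarrow> (nat \<Rightarrow> mpoly) \<Rightarrow> (nat \<Rightarrow> mpoly) \<Rightarrow> mpoly \<Rightarrow> mpoly \<Rightarrow> mpoly" where
  "pbracket n s t f g =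
     (THE h. frac h = (\<Prod>i<n-2. frac (t i)) ^ 2 * detn n (jac_matrix s t f g))"

definition eval_frac :: "mpoly \<Rightarrow> (nat \<Rightarrow> mpoly fract) \<Rightarrow> mpoly fract" where
  "eval_frac F q = (\<Sum>m\<in>Poly_Mapping.keys F. frac (Poly_Mapping.single 0 (Poly_Mapping.lookup F m)) *
                      (\<Prod>i\<in>Poly_Mapping.keys m. q i ^ Poly_Mapping.lookup m i))"

definition alg_indep :: "nat \<Rightarrow> (nat \<Rightarrow> mpoly) \<Rightarrow> (nat \<Rightarrow> mpoly) \<Rightarrow> bool" where
  "alg_indep n s t \<longleftrightarrow>
     (\<forall>F \<in> polyA (n - 2). F \<noteq> 0 \<longrightarrow> eval_frac F (\<lambda>i. Fract (s i) (t i)) \<noteq> 0)"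

definition ideal_of_A :: "nat \<Rightarrow> mpoly set \<Rightarrow> bool" where
  "ideal_of_A n P \<longleftrightarrow> P \<subseteq> polyA n \<and> 0 \<in> P \<and> (\<forall>a\<in>P. \<forall>b\<in>P. a + b \<in> P)
      \<and> (\<forall>a\<in>polyA n. \<forall>p\<in>P. a * p \<in> P)"

definition prime_ideal_of_A :: "nat \<Rightarrow> mpoly set \<Rightarrow> bool" where
  "prime_ideal_of_A n P \<longleftrightarrow> ideal_of_A n P \<and> P \<noteq> polyA n \<and>
      (\<forall>a\<in>polyA n. \<forall>b\<in>polyA n. a * b \<in> P \<longrightarrow> a \<in> P \<or> b \<in> P)"

definition poisson_prime :: "nat \<Rightarrow> (nat \<Rightarrow> mpoly) \<Rightarrow> (nat \<Rightarrow> mpoly) \<Rightarrow> mpoly set \<Rightarrow> bool" where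
  "poisson_prime n s t P \<longleftrightarrow> prime_ideal_of_A n P \<and>
      (\<forall>p\<in>P. \<forall>a\<in>polyA n. pbracket n s t p a \<in> P)"

definition proper_poisson :: "nat \<Rightarrow> (nat \<Rightarrow> mpoly) \<Rightarrow> (nat \<Rightarrow> mpoly) \<Rightarrow> mpoly set \<Rightarrow> bool" where
  "proper_poisson n s t P \<longleftrightarrow> (\<exists>a\<in>polyA n. \<exists>b\<in>polyA n. pbracket n s t a b \<notin> P)"

text \<open>gamma(P): index i (0-based) \<mapsto> (gamma_i, delta_i) with True for 1, False for 0.\<close>
definition gammaP :: "(nat \<Rightarrow> mpoly) \<Rightarrow> (nat \<Rightarrow> mpoly) \<Rightarrow> mpoly set \<Rightarrow> nat \<Rightarrow> bool \<times> bool" where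
  "gammaP s t P i = (s i \<notin> P, t i \<notin> P)"

definition dense_seq :: "nat \<Rightarrow> (nat \<Rightarrow> bool \<times> bool) \<Rightarrow> bool" where
  "dense_seq n \<gamma> \<longleftrightarrow> (\<forall>i<n-2. \<gamma> i \<noteq> (False, False))"

definition Vgamma :: "(nat \<Rightarrow> bool \<times> bool) \<Rightarrow> (nat \<Rightarrow> mpoly) \<Rightarrow> (nat \<Rightarrow> mpoly) \<Rightarrow> nat \<Rightarrow> mpoly fract" where
  "Vgamma \<gamma> s t i = (if snd (\<gamma> i) then Fract (s i) (t i) else Fract (t i) (s i))"

end

theory Submission
  imports Defs
begin

text \<open>If both \<open>s\<^sub>i\<close> and \<open>t\<^sub>i\<close> lie in \<open>P\<close>, multiply the row of the Jacobian belonging to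
  \<open>s\<^sub>i/t\<^sub>i\<close> by \<open>t\<^sub>i\<^sup>2\<close>, which the prefactor of the bracket provides: the row becomes
  \<open>t\<^sub>i \<partial>s\<^sub>i - s\<^sub>i \<partial>t\<^sub>i\<close>, a row of polynomials in \<open>P\<close>. Expanding the determinant along it shows
  that every bracket lies in \<open>P\<close>, so \<open>P\<close> is not proper. If \<open>t\<^sub>i = 1\<close>, then \<open>t\<^sub>i \<notin> P\<close>
  simply because a prime ideal does not contain \<open>1\<close>.\<close>

lemma polyA_zero: "0 \<in> polyA n"
  by (simp add: polyA_def)

lemma polyA_one: "1 \<in> polyA n"
  by (simp add: polyA_def)

lemma polyA_add: "p \<in> polyA n \<Longrightarrow> q \<in> polyA n \<Longrightarrow> p + q \<in> polyA n"
  unfolding polyA_def using keys_add[of p q] by blast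

lemma polyA_uminus: "p \<in> polyA n \<Longrightarrow> - p \<in> polyA n"
  unfolding polyA_def by simp

lemma polyA_diff: "p \<in> polyA n \<Longrightarrow> q \<in> polyA n \<Longrightarrow> p - q \<in> polyA n"
  using polyA_add[of p n "- q"] polyA_uminus by simp

lemma polyA_mult:
  assumes p: "p \<in> polyA n" and q: "q \<in> polyA n"
  shows "p * q \<in> polyA n"
proof (unfold polyA_def, intro CollectI ballI subsetI)
  fix m :: monom and x
  assume "m \<in> Poly_Mapping.keys (p * q)" and x: "x \<in> Poly_Mapping.keys m"
  then obtain a b where "m = a + b" "a \<in> Poly_Mapping.keys p" "b \<in> Poly_Mapping.keys q"
    using keys_mult[of p q] by blast
  with x p q show "x \<in> {..<n}" using keys_add[of a b] unfolding polyA_def by blast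
qed

lemma polyA_sum: "(\<And>x. x \<in> A \<Longrightarrow> f x \<in> polyA n) \<Longrightarrow> sum f A \<in> polyA n"
  by (induction A rule: infinite_finite_induct) (auto simp: polyA_zero polyA_add)

lemma polyA_prod: "(\<And>x. x \<in> A \<Longrightarrow> f x \<in> polyA n) \<Longrightarrow> prod f A \<in> polyA n"
  by (induction A rule: infinite_finite_induct)
    (auto simp: polyA_mult polyA_one)

lemma polyA_sign: "of_int (sign p) \<in> polyA n"
  by (simp add: sign_def polyA_one polyA_uminus)

lemma polyA_pder: "p \<in> polyA n \<Longrightarrow> pder j p \<in> polyA n"
  unfolding pder_def
proof (rule polyA_sum)
  fix m :: monom assume p: "p \<in> polyA n" and m: "m \<in> Poly_Mapping.keys p"
  have "Poly_Mapping.keys (m - Poly_Mapping.single j 1) \<subseteq> Poly_Mapping.keys m"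
    by (auto simp: in_keys_iff Poly_Mapping.lookup_minus)
  with p m show "Poly_Mapping.single (m - Poly_Mapping.single j 1)
       (Poly_Mapping.lookup p m * of_nat (Poly_Mapping.lookup m j)) \<in> polyA n"
    unfolding polyA_def by auto
qed

lemma ideal_of_A_sum:
  "ideal_of_A n P \<Longrightarrow> (\<And>x. x \<in> A \<Longrightarrow> f x \<in> P) \<Longrightarrow> sum f A \<in> P"
  by (induction A rule: infinite_finite_induct) (auto simp: ideal_of_A_def)

lemma one_notin_prime_ideal: "prime_ideal_of_A n P \<Longrightarrow> 1 \<notin> P"
  unfolding prime_ideal_of_A_def ideal_of_A_def by (metis mult.right_neutral subsetI subset_antisym)

lemma frac_mult: "frac (a * b) = frac a * frac b"
  by simp

lemma frac_sum: "frac (sum f A) = (\<Sum>x\<in>A. frac (f x))"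
proof (induction A rule: infinite_finite_induct)
  case (insert x F)
  then show ?case by (simp add: insert.IH[symmetric])
qed (simp_all add: Zero_fract_def)

lemma frac_prod: "frac (prod f A) = (\<Prod>x\<in>A. frac (f x))"
proof (induction A rule: infinite_finite_induct)
  case (insert x F)
  then show ?case by (simp add: insert.IH[symmetric])
qed (simp_all add: One_fract_def)

lemma frac_sign: "frac (of_int (sign p)) = of_int (sign p)"
  by (simp add: sign_def One_fract_def)

lemma frac_detn: "frac (detn n M) = detn n (\<lambda>i j. frac (M i j))"
  unfolding detn_def frac_sum
  by (rule sum.cong) (simp_all only: frac_mult frac_prod frac_sign)

lemma detn_cong:
  assumes "\<And>i j. i < n \<Longrightarrow> j < n \<Longrightarrow> M i j = M' i j"
  shows "detn n M = detn n M'"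
  unfolding detn_def
proof (rule sum.cong[OF refl])
  fix p assume "p \<in> {p. p permutes {..<n}}"
  then have "\<And>i. i < n \<Longrightarrow> p i < n" using permutes_in_image by fastforce
  with assms show "of_int (sign p) * (\<Prod>i<n. M i (p i)) = of_int (sign p) * (\<Prod>i<n. M' i (p i))"
    by (auto intro!: prod.cong)
qed

lemma detn_scale_rows: "detn n (\<lambda>k j. c k * M k j) = (\<Prod>k<n. c k) * detn n M"
  unfolding detn_def sum_distrib_left
  by (rule sum.cong) (auto simp: prod.distrib algebra_simps)

lemma detn_in_ideal_of_A_if_row:
  assumes P: "ideal_of_A n P" and r: "r < m"
    and entries: "\<And>k j. k < m \<Longrightarrow> j < m \<Longrightarrow> N k j \<in> polyA n"
    and row: "\<And>j. j < m \<Longrightarrow> N r j \<in> P"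
  shows "detn m N \<in> P"
  unfolding detn_def
proof (rule ideal_of_A_sum[OF P])
  fix p assume "p \<in> {p. p permutes {..<m}}"
  then have p: "\<And>k. k < m \<Longrightarrow> p k < m" using permutes_in_image by fastforce
  have "(\<Prod>k\<in>{..<m} - {r}. N k (p k)) * of_int (sign p) \<in> polyA n"
    using entries p by (intro polyA_mult polyA_prod polyA_sign) auto
  with P row[OF p[OF r]] have "((\<Prod>k\<in>{..<m} - {r}. N k (p k)) * of_int (sign p)) * N r (p r) \<in> P"
    by (simp add: ideal_of_A_def)
  moreover have "(\<Prod>k<m. N k (p k)) = N r (p r) * (\<Prod>k\<in>{..<m} - {r}. N k (p k))"
    using r by (simp add: prod.remove)
  ultimately show "of_int (sign p) * (\<Prod>k<m. N k (p k)) \<in> P"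
    by (simp add: algebra_simps)
qed

definition cleared_jac_matrix :: "(nat \<Rightarrow> mpoly) \<Rightarrow> (nat \<Rightarrow> mpoly) \<Rightarrow> mpoly \<Rightarrow> mpoly
    \<Rightarrow> nat \<Rightarrow> nat \<Rightarrow> mpoly" where
  "cleared_jac_matrix s t f g k j =
     (if k = 0 then pder j f
      else if k = 1 then pder j g
      else t (k - 2) * pder j (s (k - 2)) - s (k - 2) * pder j (t (k - 2)))"

definition jac_row_factor :: "(nat \<Rightarrow> mpoly) \<Rightarrow> nat \<Rightarrow> mpoly fract" where
  "jac_row_factor t k = (if k < 2 then 1 else frac (t (k - 2)) ^ 2)"

lemma frac_cleared_jac_matrix:
  assumes "2 \<le> k \<Longrightarrow> t (k - 2) \<noteq> 0"
  shows "frac (cleared_jac_matrix s t f g k j) = jac_row_factor t k * jac_matrix s t f g k j"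
proof (cases "k < 2")
  case False
  let ?d = "t (k - 2) * pder j (s (k - 2)) - s (k - 2) * pder j (t (k - 2))"
  have "jac_row_factor t k * jac_matrix s t f g k j = Fract (t (k - 2) ^ 2 * ?d) (t (k - 2) ^ 2)"
    using False by (simp add: jac_row_factor_def jac_matrix_def pder_quot_def power2_eq_square)
  also have "\<dots> = frac ?d"
    using False assms by (simp add: eq_fract)
  finally show ?thesis
    using False by (simp add: cleared_jac_matrix_def)
qed (auto simp: cleared_jac_matrix_def jac_row_factor_def jac_matrix_def)

lemma prod_jac_row_factor:
  "2 \<le> n \<Longrightarrow> (\<Prod>k<n. jac_row_factor t k) = (\<Prod>i<n-2. frac (t i)) ^ 2"
proof -
  assume "2 \<le> n"
  then have "{..<n} = {..<Suc (Suc (n - 2))}" by auto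
  then have "(\<Prod>k<n. jac_row_factor t k) = (\<Prod>i<n-2. jac_row_factor t (Suc (Suc i)))"
    by (simp only: prod.lessThan_Suc_shift) (simp add: jac_row_factor_def)
  also have "\<dots> = (\<Prod>i<n-2. frac (t i) ^ 2)"
    by (simp only: jac_row_factor_def) simp
  finally show ?thesis by (simp only: prod_power_distrib)
qed

lemma pbracket_eq_detn_cleared:
  assumes "2 \<le> n" and "\<And>i. i < n - 2 \<Longrightarrow> t i \<noteq> 0"
  shows "pbracket n s t f g = detn n (cleared_jac_matrix s t f g)"
proof -
  have "(\<Prod>i<n-2. frac (t i)) ^ 2 * detn n (jac_matrix s t f g)
        = detn n (\<lambda>k j. jac_row_factor t k * jac_matrix s t f g k j)"
    using assms(1) by (simp add: detn_scale_rows prod_jac_row_factor)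
  also have "\<dots> = frac (detn n (cleared_jac_matrix s t f g))"
    unfolding frac_detn using assms by (intro detn_cong frac_cleared_jac_matrix[symmetric]) auto
  finally show ?thesis
    unfolding pbracket_def by (intro the_equality) (auto simp: eq_fract(1))
qed

lemma pbracket_in_ideal_if_num_den_in_ideal:
  assumes n: "2 \<le> n"
    and st: "\<And>i. i < n - 2 \<Longrightarrow> s i \<in> polyA n \<and> t i \<in> polyA n"
    and t: "\<And>i. i < n - 2 \<Longrightarrow> t i \<noteq> 0"
    and P: "ideal_of_A n P"
    and i: "i < n - 2" and "s i \<in> P" and "t i \<in> P"
    and f: "f \<in> polyA n" and g: "g \<in> polyA n"
  shows "pbracket n s t f g \<in> P"
proof -
  have "detn n (cleared_jac_matrix s t f g) \<in> P"
  proof (rule detn_in_ideal_of_A_if_row[OF P])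
    show "cleared_jac_matrix s t f g k j \<in> polyA n" if "k < n" for k j
      using that st[of "k - 2"] f g
      by (auto simp: cleared_jac_matrix_def intro!: polyA_pder polyA_diff polyA_mult)
    show "cleared_jac_matrix s t f g (i + 2) j \<in> P" for j
    proof -
      have row: "cleared_jac_matrix s t f g (i + 2) j = pder j (s i) * t i + - pder j (t i) * s i"
        by (simp add: cleared_jac_matrix_def algebra_simps)
      have "pder j (s i) \<in> polyA n" "- pder j (t i) \<in> polyA n"
        using st[OF i] by (simp_all add: polyA_pder polyA_uminus)
      with P \<open>s i \<in> P\<close> \<open>t i \<in> P\<close> show ?thesis
        unfolding row ideal_of_A_def by (metis (no_types, lifting))
    qed
  qed (use i in simp)
  then show ?thesis
    using pbracket_eq_detn_cleared[of n t s f g] n t by simp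
qed

theorem lemma2p16:
  fixes n :: nat and s t :: "nat \<Rightarrow> mpoly" and P :: "mpoly set"
  assumes "n \<ge> 3"
    and "\<And>i. i < n - 2 \<Longrightarrow> s i \<in> polyA n \<and> t i \<in> polyA n"
    and "\<And>i. i < n - 2 \<Longrightarrow> t i \<noteq> 0"
    and "\<And>i. i < n - 2 \<Longrightarrow> coprime_poly (s i) (t i)"
    and "alg_indep n s t"
    and "poisson_prime n s t P"
  shows "(proper_poisson n s t P \<longrightarrow> dense_seq n (gammaP s t P))
       \<and> (\<forall>i<n-2. t i = 1 \<longrightarrow>
            snd (gammaP s t P i) \<and> Vgamma (gammaP s t P) s t i = frac (s i))"
proof (intro conjI impI allI)
  have prime: "prime_ideal_of_A n P"
    using assms(6) by (simp add: poisson_prime_def)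
  then have ideal: "ideal_of_A n P"
    by (simp add: prime_ideal_of_A_def)
  show "dense_seq n (gammaP s t P)" if "proper_poisson n s t P"
    using that pbracket_in_ideal_if_num_den_in_ideal[OF _ assms(2,3) ideal] assms(1)
    by (fastforce simp: dense_seq_def gammaP_def proper_poisson_def)
  fix i assume "t i = 1"
  with one_notin_prime_ideal[OF prime] have "snd (gammaP s t P i)"
    by (simp add: gammaP_def)
  with \<open>t i = 1\<close> show "snd (gammaP s t P i)" "Vgamma (gammaP s t P) s t i = frac (s i)"
    by (simp_all add: Vgamma_def)
qed

end
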